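(* Let $\mathcal{D}[t]\subset\mathcal{H}\subset\mathcal{D}^\times[t^\times]$ be a rigged Hilbert space with $\mathcal{D}[t]$ complete and reflexive. A sequence $\{\zeta_n\}$ of elements of $\mathcal{D}^\times$ is Bessel-like if and only if, for every orthonormal basis $\{e_n\}$ of $\mathcal{H}$, there exists $W\in\mathcal{C}(\mathcal{H},\mathcal{D}^\times)$ such that $We_n=\zeta_n$ for every $n\in\mathbb{N}$ (here $W$ denotes its continuous extension to $\mathcal{H}$).
   Context: A rigged Hilbert space $\mathcal{D}[t]\subset\mathcal{H}\subset\mathcal{D}^\times[t^\times]$: $\mathcal{D}$ is a dense subspace of the Hilbert space $\mathcal{H}$ with a locally convex topology $t$ finer than the norm topology, $\mathcal{D}^\times$ is the space of continuous conjugate-linear functionals on $\mathcal{D}[t]$ with the strong dual topology $t^\times=\beta(\mathcal{D}^\times,\mathcal{D})$, $\mathcal{H}\subset\mathcal{D}^\times$, and the duality form $\langle\Phi,\eta\rangle$ (value of $\Phi\in\mathcal{D}^\times$ at $\eta\in\mathcal{D}$) extends the inner product. $\mathcal{L}(\mathcal{D},\mathcal{D}^\times)$ denotes the continuous linear maps from $\mathcal{D}[t]$ into $\mathcal{D}^\times[t^\times]$. For $\mathcal{E},\mathcal{F}\in\{\mathcal{D},\mathcal{H},\mathcal{D}^\times\}$ (with their respective topologies $t$, norm, $t^\times$), $\mathcal{C}(\mathcal{E},\mathcal{F})$ is the set of $X\in\mathcal{L}(\mathcal{D},\mathcal{D}^\times)$ for which there exists a continuous linear map $Y:\mathcal{E}\to\mathcal{F}$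 with $Y\xi=X\xi$ for all $\xi\in\mathcal{D}$; $X$ is identified with $Y$. A sequence $\{\zeta_n\}\subset\mathcal{D}^\times$ is Bessel-like if for every bounded subset $\mathcal{M}$ of $\mathcal{D}[t]$, $\sup_{\eta\in\mathcal{M}}\sum_{k=1}^\infty|\langle\zeta_k,\eta\rangle|^2<\infty$. *)

theory Defs
  imports Complex_Main
begin

definition hnorm :: "('h \<Rightarrow> 'h \<Rightarrow> complex) \<Rightarrow> 'h \<Rightarrow> real" where
  "hnorm ip x = sqrt (Re (ip x x))"

definition cHilbert ::
  "(complex \<Rightarrow> 'h::ab_group_add \<Rightarrow> 'h) \<Rightarrow> ('h \<Rightarrow> 'h \<Rightarrow> complex) \<Rightarrow> bool" where
  "cHilbert sc ip \<longleftrightarrow>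
     (\<forall>x. sc 1 x = x) \<and>
     (\<forall>a b x. sc a (sc b x) = sc (a * b) x) \<and>
     (\<forall>a b x. sc (a + b) x = sc a x + sc b x) \<and>
     (\<forall>a x y. sc a (x + y) = sc a x + sc a y) \<and>
     (\<forall>x y z. ip (x + y) z = ip x z + ip y z) \<and>
     (\<forall>a x y. ip (sc a x) y = a * ip x y) \<and>
     (\<forall>x y. ip x y = cnj (ip y x)) \<and>
     (\<forall>x. Im (ip x x) = 0 \<and> Re (ip x x) \<ge> 0) \<and>
     (\<forall>x. ip x x = 0 \<longrightarrow> x = 0) \<and>
     (\<forall>X::nat \<Rightarrow> 'h. (\<forall>\<epsilon>>0. \<exists>N. \<forall>m\<ge>N. \<forall>n\<ge>N. hnorm ip (X m - X n) < \<epsilon>)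
        \<longrightarrow> (\<exists>l. (\<lambda>n. hnorm ip (X n - l)) \<longlonglongrightarrow> 0))"

definition onb :: "('h::ab_group_add \<Rightarrow> 'h \<Rightarrow> complex) \<Rightarrow> (nat \<Rightarrow> 'h) \<Rightarrow> bool" where
  "onb ip e \<longleftrightarrow> (\<forall>i j. ip (e i) (e j) = (if i = j then 1 else 0)) \<and>
                  (\<forall>x. (\<forall>n. ip x (e n) = 0) \<longrightarrow> x = 0)"

definition seminorm_on ::
  "(complex \<Rightarrow> 'h::ab_group_add \<Rightarrow> 'h) \<Rightarrow> 'h set \<Rightarrow> ('h \<Rightarrow> real) \<Rightarrow> bool" where
  "seminorm_on sc D p \<longleftrightarrow>
     (\<forall>x\<in>D. p x \<ge> 0) \<and> (\<forall>x\<in>D. \<forall>y\<in>D. p (x + y) \<le> p x + p y) \<and>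
     (\<forall>a. \<forall>x\<in>D. p (sc a x) = cmod a * p x)"

definition bnd :: "'h set \<Rightarrow> ('h \<Rightarrow> real) set \<Rightarrow> 'h set \<Rightarrow> bool" where
  "bnd D S M \<longleftrightarrow> M \<subseteq> D \<and> (\<forall>p\<in>S. \<exists>C. \<forall>x\<in>M. p x \<le> C)"

text \<open>The conjugate dual D^x: continuous conjugate-linear functionals on D[t]
  (represented extensionally, i.e. vanishing outside D).\<close>
definition dualx ::
  "(complex \<Rightarrow> 'h::ab_group_add \<Rightarrow> 'h) \<Rightarrow> 'h set \<Rightarrow> ('h \<Rightarrow> real) set \<Rightarrow> ('h \<Rightarrow> complex) set" where
  "dualx sc D S = {\<Phi>. (\<forall>x. x \<notin> D \<longrightarrow> \<Phi> x = 0) \<and>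
      (\<forall>x\<in>D. \<forall>y\<in>D. \<Phi> (x + y) = \<Phi> x + \<Phi> y) \<and>
      (\<forall>a. \<forall>x\<in>D. \<Phi> (sc a x) = cnj a * \<Phi> x) \<and>
      (\<exists>F C. F \<subseteq> S \<and> finite F \<and> (\<forall>x\<in>D. cmod (\<Phi> x) \<le> C * (\<Sum>p\<in>F. p x)))}"

text \<open>Seminorms generating the strong dual topology t^x = beta(D^x, D).\<close>
definition strong_sn :: "'h set \<Rightarrow> ('h \<Rightarrow> real) set \<Rightarrow> (('h \<Rightarrow> complex) \<Rightarrow> real) set" where
  "strong_sn D S = {(\<lambda>\<Phi>. SUP \<eta>\<in>M. cmod (\<Phi> \<eta>)) | M. bnd D S M \<and> M \<noteq> {}}"

definition emb :: "('h \<Rightarrow> 'h \<Rightarrow> complex) \<Rightarrow> 'h set \<Rightarrow> 'h \<Rightarrow> ('h \<Rightarrow> complex)" where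
  "emb ip D \<xi> = (\<lambda>\<eta>. if \<eta> \<in> D then ip \<xi> \<eta> else 0)"

definition rigged ::
  "(complex \<Rightarrow> 'h::ab_group_add \<Rightarrow> 'h) \<Rightarrow> ('h \<Rightarrow> 'h \<Rightarrow> complex) \<Rightarrow> 'h set \<Rightarrow> ('h \<Rightarrow> real) set \<Rightarrow> bool" where
  "rigged sc ip D S \<longleftrightarrow>
     cHilbert sc ip \<and>
     0 \<in> D \<and> (\<forall>x\<in>D. \<forall>y\<in>D. x + y \<in> D) \<and> (\<forall>a. \<forall>x\<in>D. sc a x \<in> D) \<and>
     (\<forall>x. \<forall>\<epsilon>>0. \<exists>d\<in>D. hnorm ip (x - d) < \<epsilon>) \<and>
     (\<forall>p\<in>S. seminorm_on sc D p) \<and>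
     (\<exists>F C. F \<subseteq> S \<and> finite F \<and> (\<forall>x\<in>D. hnorm ip x \<le> C * (\<Sum>p\<in>F. p x)))"

definition lcs_complete :: "'h::ab_group_add set \<Rightarrow> ('h \<Rightarrow> real) set \<Rightarrow> bool" where
  "lcs_complete D S \<longleftrightarrow>
     (\<forall>F. F \<noteq> bot \<and> eventually (\<lambda>x. x \<in> D) F \<and>
          (\<forall>p\<in>S. \<forall>\<epsilon>>0. eventually (\<lambda>(x, y). p (x - y) < \<epsilon>) (F \<times>\<^sub>F F))
        \<longrightarrow> (\<exists>x\<in>D. \<forall>p\<in>S. \<forall>\<epsilon>>0. eventually (\<lambda>y. p (y - x) < \<epsilon>) F))"

definition bnd_dual ::
  "(complex \<Rightarrow> 'h::ab_group_add \<Rightarrow> 'h) \<Rightarrow> 'h set \<Rightarrow> ('h \<Rightarrow> real) set \<Rightarrow> ('h \<Rightarrow> complex) set \<Rightarrow> bool" where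
  "bnd_dual sc D S B \<longleftrightarrow> B \<subseteq> dualx sc D S \<and> (\<forall>q\<in>strong_sn D S. \<exists>C. \<forall>\<Phi>\<in>B. q \<Phi> \<le> C)"

text \<open>Reflexivity of D[t]: the canonical map into the strong bidual
  (continuous conjugate-linear functionals on D^x[t^x]) is onto, and t coincides
  with the strong topology beta(D, D^x).\<close>
definition reflexive_lcs ::
  "(complex \<Rightarrow> 'h::ab_group_add \<Rightarrow> 'h) \<Rightarrow> 'h set \<Rightarrow> ('h \<Rightarrow> real) set \<Rightarrow> bool" where
  "reflexive_lcs sc D S \<longleftrightarrow>
     (\<forall>G :: ('h \<Rightarrow> complex) \<Rightarrow> complex.
        (\<forall>\<Phi>\<in>dualx sc D S. \<forall>\<Psi>\<in>dualx sc D S. G (\<lambda>\<eta>. \<Phi> \<eta> + \<Psi> \<eta>) = G \<Phi> + G \<Psi>) \<and>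
        (\<forall>a. \<forall>\<Phi>\<in>dualx sc D S. G (\<lambda>\<eta>. a * \<Phi> \<eta>) = cnj a * G \<Phi>) \<and>
        (\<exists>Q C. Q \<subseteq> strong_sn D S \<and> finite Q \<and>
           (\<forall>\<Phi>\<in>dualx sc D S. cmod (G \<Phi>) \<le> C * (\<Sum>q\<in>Q. q \<Phi>)))
        \<longrightarrow> (\<exists>\<eta>\<in>D. \<forall>\<Phi>\<in>dualx sc D S. G \<Phi> = cnj (\<Phi> \<eta>))) \<and>
     (let R = {(\<lambda>\<eta>. SUP \<Phi>\<in>B. cmod (\<Phi> \<eta>)) | B. bnd_dual sc D S B \<and> B \<noteq> {}} in
        (\<forall>p\<in>S. \<exists>Q C. Q \<subseteq> R \<and> finite Q \<and> (\<forall>x\<in>D. p x \<le> C * (\<Sum>r\<in>Q. r x))) \<and>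
        (\<forall>r\<in>R. \<exists>F C. F \<subseteq> S \<and> finite F \<and> (\<forall>x\<in>D. r x \<le> C * (\<Sum>p\<in>F. p x))))"

definition bessel_like ::
  "'h set \<Rightarrow> ('h \<Rightarrow> real) set \<Rightarrow> (nat \<Rightarrow> ('h \<Rightarrow> complex)) \<Rightarrow> bool" where
  "bessel_like D S \<zeta> \<longleftrightarrow>
     (\<forall>M. bnd D S M \<longrightarrow>
        (\<exists>B. \<forall>\<eta>\<in>M. summable (\<lambda>k. (cmod (\<zeta> k \<eta>))\<^sup>2) \<and> (\<Sum>k. (cmod (\<zeta> k \<eta>))\<^sup>2) \<le> B))"

definition Lop ::
  "(complex \<Rightarrow> 'h::ab_group_add \<Rightarrow> 'h) \<Rightarrow> 'h set \<Rightarrow> ('h \<Rightarrow> real) set \<Rightarrow> ('h \<Rightarrow> ('h \<Rightarrow> complex)) set" where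
  "Lop sc D S = {X. (\<forall>x\<in>D. X x \<in> dualx sc D S) \<and>
      (\<forall>x\<in>D. \<forall>y\<in>D. X (x + y) = (\<lambda>\<eta>. X x \<eta> + X y \<eta>)) \<and>
      (\<forall>a. \<forall>x\<in>D. X (sc a x) = (\<lambda>\<eta>. a * X x \<eta>)) \<and>
      (\<forall>q\<in>strong_sn D S. \<exists>F C. F \<subseteq> S \<and> finite F \<and>
          (\<forall>x\<in>D. q (X x) \<le> C * (\<Sum>p\<in>F. p x)))}"

text \<open>Y is a continuous linear map H \<rightarrow> D^x[t^x] extending X (so X \<in> C(H, D^x)
  when X \<in> L(D, D^x) and such a Y exists; X is identified with Y).\<close>
definition CHext ::
  "(complex \<Rightarrow> 'h::ab_group_add \<Rightarrow> 'h) \<Rightarrow> ('h \<Rightarrow> 'h \<Rightarrow> complex) \<Rightarrow> 'h set \<Rightarrow> ('h \<Rightarrow> real) set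
    \<Rightarrow> ('h \<Rightarrow> ('h \<Rightarrow> complex)) \<Rightarrow> ('h \<Rightarrow> ('h \<Rightarrow> complex)) \<Rightarrow> bool" where
  "CHext sc ip D S X Y \<longleftrightarrow>
     (\<forall>x. Y x \<in> dualx sc D S) \<and>
     (\<forall>x y. Y (x + y) = (\<lambda>\<eta>. Y x \<eta> + Y y \<eta>)) \<and>
     (\<forall>a x. Y (sc a x) = (\<lambda>\<eta>. a * Y x \<eta>)) \<and>
     (\<forall>q\<in>strong_sn D S. \<exists>C. \<forall>x. q (Y x) \<le> C * hnorm ip x) \<and>
     (\<forall>\<xi>\<in>D. Y \<xi> = X \<xi>)"

end

theory Submission
  imports Defs "HOL-Analysis.L2_Norm"
begin

text \<open>If \<open>\<zeta>\<close> is Bessel-like, the synthesis map \<open>W x = \<Sum>\<^sub>n \<langle>x, e\<^sub>n\<rangle> \<zeta>\<^sub>n\<close> is well defined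
  and sends \<open>e\<^sub>n\<close> to \<open>\<zeta>\<^sub>n\<close>. By Cauchy-Schwarz, \<open>|W x \<eta>| \<le> \<parallel>x\<parallel> sup\<^sub>\<Phi>\<^sub>\<in>\<^sub>B |\<Phi> \<eta>|\<close>, where \<open>B\<close> is the set
  of finite combinations \<open>\<Sum> a\<^sub>n \<zeta>\<^sub>n\<close> with \<open>\<Sum> |a\<^sub>n|\<^sup>2 \<le> 1\<close>; the Bessel-like property makes \<open>B\<close>
  strongly bounded in \<open>D\<^sup>\<times>\<close>, so by reflexivity this supremum is a continuous seminorm on \<open>D[t]\<close>.
  Hence each \<open>W x\<close> lies in \<open>D\<^sup>\<times>\<close>, and on a bounded set \<open>M\<close> the same estimate gives continuity
  of \<open>W\<close> from \<open>H\<close> into \<open>D\<^sup>\<times>[t\<^sup>\<times>]\<close>.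
  Conversely, testing a continuous \<open>W\<close> at \<open>x = \<Sum>\<^sub>k\<^sub><\<^sub>N conj(\<zeta>\<^sub>k \<eta>) e\<^sub>k\<close> gives
  \<open>s \<le> C \<surd>s\<close> for \<open>s = \<Sum>\<^sub>k\<^sub><\<^sub>N |\<zeta>\<^sub>k \<eta>|\<^sup>2\<close>, uniformly for \<open>\<eta> \<in> M\<close>.\<close>

subsection \<open>Scalar estimates\<close>

lemma norm_mult_le_half_sum_squares: "cmod (a * b) \<le> ((cmod a)\<^sup>2 + (cmod b)\<^sup>2) / 2"
proof -
  have "0 \<le> (cmod a - cmod b)\<^sup>2" by simp
  then show ?thesis by (simp add: norm_mult power2_eq_square algebra_simps)
qed

lemma norm_sum_mult_le_sqrt_sums:
  fixes a b :: "nat \<Rightarrow> complex"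
  shows "cmod (\<Sum>n<N. a n * b n) \<le> sqrt (\<Sum>n<N. (cmod (a n))\<^sup>2) * sqrt (\<Sum>n<N. (cmod (b n))\<^sup>2)"
proof -
  have "cmod (\<Sum>n<N. a n * b n) \<le> (\<Sum>n<N. cmod (a n * b n))"
    by (rule norm_sum)
  also have "\<dots> = (\<Sum>n<N. \<bar>cmod (a n)\<bar> * \<bar>cmod (b n)\<bar>)"
    by (simp add: norm_mult)
  also have "\<dots> \<le> L2_set (\<lambda>n. cmod (a n)) {..<N} * L2_set (\<lambda>n. cmod (b n)) {..<N}"
    by (rule L2_set_mult_ineq)
  finally show ?thesis unfolding L2_set_def by simp
qed

lemma norm_suminf_le_bound:
  fixes f :: "nat \<Rightarrow> complex"
  assumes "summable f" "\<And>N. cmod (\<Sum>n<N. f n) \<le> K"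
  shows "cmod (suminf f) \<le> K"
proof -
  have "(\<lambda>N. cmod (\<Sum>n<N. f n)) \<longlonglongrightarrow> cmod (suminf f)"
    using summable_LIMSEQ[OF assms(1)] by (rule tendsto_norm)
  then show ?thesis by (rule LIMSEQ_le_const2) (use assms(2) in auto)
qed

lemma sqrt_sum_lessThan_le_sqrt_suminf:
  fixes f :: "nat \<Rightarrow> real"
  assumes "summable f" "\<And>n. 0 \<le> f n"
  shows "sqrt (\<Sum>n<N. f n) \<le> sqrt (\<Sum>n. f n)"
  using sum_le_suminf[OF assms(1), of "{..<N}"] assms(2) by simp

lemma le_square_if_le_mult_sqrt:
  fixes s C :: real
  assumes "0 \<le> s" "s \<le> C * sqrt s"
  shows "s \<le> C\<^sup>2"
proof (cases "s = 0")
  case False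
  then have "0 < sqrt s" using assms(1) by simp
  moreover have "sqrt s * sqrt s \<le> C * sqrt s" using assms by simp
  ultimately have "sqrt s \<le> C" by (rule mult_right_le_imp_le[rotated])
  then have "(sqrt s)\<^sup>2 \<le> C\<^sup>2" using assms(1) by (intro power_mono) auto
  then show ?thesis using assms(1) by simp
qed simp

subsection \<open>Hilbert space geometry\<close>

definition orthonormal_seq :: "('h \<Rightarrow> 'h \<Rightarrow> complex) \<Rightarrow> (nat \<Rightarrow> 'h) \<Rightarrow> bool" where
  "orthonormal_seq ip e \<longleftrightarrow> (\<forall>i j. ip (e i) (e j) = (if i = j then 1 else 0))"

lemma onb_imp_orthonormal_seq: "onb ip e \<Longrightarrow> orthonormal_seq ip e"
  unfolding onb_def orthonormal_seq_def by blast

locale complex_hilbert =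
  fixes sc :: "complex \<Rightarrow> 'h::ab_group_add \<Rightarrow> 'h" and ip :: "'h \<Rightarrow> 'h \<Rightarrow> complex"
  assumes cHilbert: "cHilbert sc ip"
begin

lemma ip_add_left: "ip (x + y) z = ip x z + ip y z"
  using cHilbert unfolding cHilbert_def by blast

lemma ip_sc_left: "ip (sc a x) y = a * ip x y"
  using cHilbert unfolding cHilbert_def by blast

lemma ip_cnj: "ip x y = cnj (ip y x)"
  using cHilbert unfolding cHilbert_def by blast

lemma ip_self_Im: "Im (ip x x) = 0"
  and ip_self_Re_nonneg: "Re (ip x x) \<ge> 0"
  using cHilbert unfolding cHilbert_def by blast+

lemma ip_self_eq_0: "ip x x = 0 \<Longrightarrow> x = 0"
  using cHilbert unfolding cHilbert_def by blast

lemma ip_zero_left [simp]: "ip 0 y = 0"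
  using ip_add_left[of 0 0 y] by simp

lemma ip_sum_left: "ip (\<Sum>i\<in>A. f i) y = (\<Sum>i\<in>A. ip (f i) y)"
  by (induction A rule: infinite_finite_induct) (auto simp: ip_add_left)

lemma ip_diff_left: "ip (x - y) z = ip x z - ip y z"
  using ip_add_left[of "x - y" y z] by simp

lemma ip_diff_right: "ip z (x - y) = ip z x - ip z y"
  by (metis ip_cnj ip_diff_left complex_cnj_diff)

lemma hnorm_square: "(hnorm ip x)\<^sup>2 = Re (ip x x)"
  unfolding hnorm_def using ip_self_Re_nonneg[of x] by simp

lemma hnorm_zero [simp]: "hnorm ip 0 = 0"
  unfolding hnorm_def by simp

lemma hnorm_nonneg: "hnorm ip x \<ge> 0"
  unfolding hnorm_def using ip_self_Re_nonneg[of x] by simp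

lemma hnorm_eq_0: "hnorm ip x = 0 \<Longrightarrow> x = 0"
  unfolding hnorm_def using ip_self_Im[of x] ip_self_Re_nonneg[of x] ip_self_eq_0[of x]
  by (simp add: complex_eq_iff)

context
  fixes e :: "nat \<Rightarrow> 'h"
  assumes orthonormal: "orthonormal_seq ip e"
begin

lemma ip_orthonormal_comb_basis:
  "ip (\<Sum>n<N. sc (a n) (e n)) (e m) = (if m < N then a m else 0)"
proof -
  have "ip (\<Sum>n<N. sc (a n) (e n)) (e m) = (\<Sum>n<N. a n * (if n = m then 1 else 0))"
    using orthonormal by (simp add: orthonormal_seq_def ip_sum_left ip_sc_left)
  also have "\<dots> = (if m < N then a m else 0)"
    by (simp add: if_distrib[of "\<lambda>x. _ * x"] cong: if_cong)
  finally show ?thesis .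
qed

lemma ip_orthonormal_comb_self:
  "ip (\<Sum>n<N. sc (a n) (e n)) (\<Sum>n<N. sc (a n) (e n)) = of_real (\<Sum>n<N. (cmod (a n))\<^sup>2)"
proof -
  let ?y = "\<Sum>n<N. sc (a n) (e n)"
  have "ip ?y ?y = (\<Sum>n<N. a n * ip (e n) ?y)" by (simp add: ip_sum_left ip_sc_left)
  also have "\<dots> = (\<Sum>n<N. a n * cnj (a n))"
    by (rule sum.cong) (auto simp: ip_cnj[of "e _" ?y] ip_orthonormal_comb_basis)
  finally show ?thesis by (simp add: complex_norm_square[symmetric])
qed

lemma hnorm_orthonormal_comb:
  "hnorm ip (\<Sum>n<N. sc (a n) (e n)) = sqrt (\<Sum>n<N. (cmod (a n))\<^sup>2)"
  unfolding hnorm_def ip_orthonormal_comb_self by simp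

text \<open>Bessel's inequality, from \<open>\<langle>x - y, x - y\<rangle> \<ge> 0\<close> for the partial expansion \<open>y\<close> of \<open>x\<close>.\<close>
lemma bessel_inequality_partial: "(\<Sum>n<N. (cmod (ip x (e n)))\<^sup>2) \<le> (hnorm ip x)\<^sup>2"
proof -
  define y where "y = (\<Sum>n<N. sc (ip x (e n)) (e n))"
  define s where "s = (\<Sum>n<N. (cmod (ip x (e n)))\<^sup>2)"
  have yy: "ip y y = of_real s"
    unfolding y_def s_def by (rule ip_orthonormal_comb_self)
  have "ip y x = (\<Sum>n<N. ip x (e n) * cnj (ip x (e n)))"
    unfolding y_def by (simp add: ip_sum_left ip_sc_left ip_cnj[of "e _" x])
  then have yx: "ip y x = of_real s"
    unfolding s_def by (simp add: complex_norm_square[symmetric])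
  then have xy: "ip x y = of_real s" using ip_cnj[of x y] by simp
  have "ip (x - y) (x - y) = ip x x - of_real s"
    by (simp add: ip_diff_left ip_diff_right yy yx xy)
  then show ?thesis
    using ip_self_Re_nonneg[of "x - y"] unfolding hnorm_square s_def by simp
qed

lemma sqrt_bessel_partial_le: "sqrt (\<Sum>n<N. (cmod (ip x (e n)))\<^sup>2) \<le> hnorm ip x"
  using real_sqrt_le_mono[OF bessel_inequality_partial] hnorm_nonneg by simp

lemma summable_coeff_squares: "summable (\<lambda>n. (cmod (ip x (e n)))\<^sup>2)"
  by (rule summableI_nonneg_bounded) (auto intro: bessel_inequality_partial)

end

end

subsection \<open>The dual space\<close>

lemma dualx_vanishes: "\<Phi> \<in> dualx sc D S \<Longrightarrow> \<eta> \<notin> D \<Longrightarrow> \<Phi> \<eta> = 0"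
  unfolding dualx_def by blast

lemma dualx_zero: "(\<lambda>\<eta>. 0) \<in> dualx sc D S"
  unfolding dualx_def by (auto intro!: exI[of _ "{}"])

lemma dualx_add:
  assumes \<Phi>: "\<Phi> \<in> dualx sc D S" and \<Psi>: "\<Psi> \<in> dualx sc D S"
    and nonneg: "\<forall>p\<in>S. \<forall>x\<in>D. 0 \<le> p x"
  shows "(\<lambda>\<eta>. \<Phi> \<eta> + \<Psi> \<eta>) \<in> dualx sc D S"
proof -
  obtain F1 C1 where F1: "F1 \<subseteq> S" "finite F1" "\<forall>x\<in>D. cmod (\<Phi> x) \<le> C1 * (\<Sum>p\<in>F1. p x)"
    using \<Phi> unfolding dualx_def by blast
  obtain F2 C2 where F2: "F2 \<subseteq> S" "finite F2" "\<forall>x\<in>D. cmod (\<Psi> x) \<le> C2 * (\<Sum>p\<in>F2. p x)"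
    using \<Psi> unfolding dualx_def by blast
  have "cmod (\<Phi> x + \<Psi> x) \<le> (\<bar>C1\<bar> + \<bar>C2\<bar>) * (\<Sum>p\<in>F1 \<union> F2. p x)" if x: "x \<in> D" for x
  proof -
    have "\<forall>p\<in>F1 \<union> F2. 0 \<le> p x" using F1 F2 nonneg x by blast
    then have sums: "(\<Sum>p\<in>Fi. p x) \<le> (\<Sum>p\<in>F1 \<union> F2. p x)" "0 \<le> (\<Sum>p\<in>Fi. p x)"
      if "Fi \<subseteq> F1 \<union> F2" for Fi
      using that F1(2) F2(2) by (auto intro!: sum_mono2 sum_nonneg)
    have "cmod (\<Phi> x + \<Psi> x) \<le> cmod (\<Phi> x) + cmod (\<Psi> x)"
      by (rule norm_triangle_ineq)
    also have "\<dots> \<le> \<bar>C1\<bar> * (\<Sum>p\<in>F1. p x) + \<bar>C2\<bar> * (\<Sum>p\<in>F2. p x)"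
      using F1(3) F2(3) x sums(2)[of F1] sums(2)[of F2]
      by (intro add_mono order_trans[OF _ mult_right_mono[OF abs_ge_self]]) auto
    also have "\<dots> \<le> \<bar>C1\<bar> * (\<Sum>p\<in>F1 \<union> F2. p x) + \<bar>C2\<bar> * (\<Sum>p\<in>F1 \<union> F2. p x)"
      using sums(1) by (intro add_mono mult_left_mono) auto
    finally show ?thesis by (simp add: distrib_right)
  qed
  then have "\<exists>F C. F \<subseteq> S \<and> finite F \<and> (\<forall>x\<in>D. cmod (\<Phi> x + \<Psi> x) \<le> C * (\<Sum>p\<in>F. p x))"
    using F1(1,2) F2(1,2) by (intro exI[of _ "F1 \<union> F2"] exI[of _ "\<bar>C1\<bar> + \<bar>C2\<bar>"]) auto
  with \<Phi> \<Psi> show ?thesis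
    unfolding dualx_def by (simp add: algebra_simps)
qed

lemma dualx_scale:
  assumes \<Phi>: "\<Phi> \<in> dualx sc D S"
  shows "(\<lambda>\<eta>. a * \<Phi> \<eta>) \<in> dualx sc D S"
proof -
  obtain F C where F: "F \<subseteq> S" "finite F" "\<forall>x\<in>D. cmod (\<Phi> x) \<le> C * (\<Sum>p\<in>F. p x)"
    using \<Phi> unfolding dualx_def by blast
  then have "\<exists>F C. F \<subseteq> S \<and> finite F \<and> (\<forall>x\<in>D. cmod (a * \<Phi> x) \<le> C * (\<Sum>p\<in>F. p x))"
    by (intro exI[of _ F] exI[of _ "cmod a * C"]) (simp add: norm_mult mult.assoc mult_left_mono)
  with \<Phi> show ?thesis
    unfolding dualx_def by (simp add: algebra_simps)
qed

lemma dualx_sum_scaled: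
  fixes N :: nat
  assumes "\<forall>k. \<zeta> k \<in> dualx sc D S" "\<forall>p\<in>S. \<forall>x\<in>D. 0 \<le> p x"
  shows "(\<lambda>\<eta>. \<Sum>k<N. a k * \<zeta> k \<eta>) \<in> dualx sc D S"
proof (induction N)
  case (Suc N)
  have "(\<lambda>\<eta>. (\<Sum>k<N. a k * \<zeta> k \<eta>) + a N * \<zeta> N \<eta>) \<in> dualx sc D S"
    using Suc assms by (intro dualx_add dualx_scale) auto
  then show ?case by simp
qed (simp add: dualx_zero)

lemma dualx_bdd_above_on_bnd:
  assumes \<Phi>: "\<Phi> \<in> dualx sc D S" and M: "bnd D S M" and nonneg: "\<forall>p\<in>S. \<forall>x\<in>D. 0 \<le> p x"
  shows "bdd_above ((\<lambda>\<eta>. cmod (\<Phi> \<eta>)) ` M)"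
proof -
  obtain F C where F: "F \<subseteq> S" "finite F" "\<forall>x\<in>D. cmod (\<Phi> x) \<le> C * (\<Sum>p\<in>F. p x)"
    using \<Phi> unfolding dualx_def by blast
  obtain c where c: "\<forall>p\<in>S. \<forall>x\<in>M. p x \<le> c p"
    using M unfolding bnd_def by metis
  have "cmod (\<Phi> \<eta>) \<le> \<bar>C\<bar> * (\<Sum>p\<in>F. c p)" if \<eta>: "\<eta> \<in> M" for \<eta>
  proof -
    have D: "\<eta> \<in> D" using M \<eta> unfolding bnd_def by blast
    then have "C * (\<Sum>p\<in>F. p \<eta>) \<le> \<bar>C\<bar> * (\<Sum>p\<in>F. p \<eta>)"
      using F nonneg by (intro mult_right_mono) (auto intro!: sum_nonneg)
    also have "\<dots> \<le> \<bar>C\<bar> * (\<Sum>p\<in>F. c p)"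
      using F c \<eta> by (intro mult_left_mono sum_mono) auto
    finally show ?thesis using F(3) D by fastforce
  qed
  then show ?thesis by (meson bdd_aboveI2)
qed

lemma reflexive_lcs_SUP_bnd_dual:
  assumes "reflexive_lcs sc D S" "bnd_dual sc D S B" "B \<noteq> {}"
  shows "\<exists>F C. F \<subseteq> S \<and> finite F \<and> (\<forall>x\<in>D. (SUP \<Phi>\<in>B. cmod (\<Phi> x)) \<le> C * (\<Sum>p\<in>F. p x))"
proof -
  define R where "R = {(\<lambda>\<eta>. SUP \<Phi>\<in>B. cmod (\<Phi> \<eta>)) | B. bnd_dual sc D S B \<and> B \<noteq> {}}"
  have "(\<forall>p\<in>S. \<exists>Q C. Q \<subseteq> R \<and> finite Q \<and> (\<forall>x\<in>D. p x \<le> C * (\<Sum>r\<in>Q. r x))) \<and>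
        (\<forall>r\<in>R. \<exists>F C. F \<subseteq> S \<and> finite F \<and> (\<forall>x\<in>D. r x \<le> C * (\<Sum>p\<in>F. p x)))"
    using assms(1) unfolding reflexive_lcs_def Let_def R_def by (rule conjunct2)
  then have "\<forall>r\<in>R. \<exists>F C. F \<subseteq> S \<and> finite F \<and> (\<forall>x\<in>D. r x \<le> C * (\<Sum>p\<in>F. p x))"
    by (rule conjunct2)
  moreover have "(\<lambda>\<eta>. SUP \<Phi>\<in>B. cmod (\<Phi> \<eta>)) \<in> R"
    unfolding R_def using assms(2,3) by blast
  ultimately show ?thesis by (rule bspec)
qed

subsection \<open>Bessel-like sequences and the synthesis map\<close>

lemma bessel_like_summable_squares:
  assumes "bessel_like D S \<zeta>" "\<forall>n. \<zeta> n \<in> dualx sc D S"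
  shows "summable (\<lambda>n. (cmod (\<zeta> n \<eta>))\<^sup>2)"
proof (cases "\<eta> \<in> D")
  case True
  then have "bnd D S {\<eta>}" unfolding bnd_def by auto
  with assms(1) obtain B where "summable (\<lambda>k. (cmod (\<zeta> k \<eta>))\<^sup>2)"
    unfolding bessel_like_def by blast
  then show ?thesis .
next
  case False
  then have "\<zeta> n \<eta> = 0" for n using dualx_vanishes assms(2) by blast
  then show ?thesis by simp
qed

definition unit_combinations :: "(nat \<Rightarrow> 'h \<Rightarrow> complex) \<Rightarrow> ('h \<Rightarrow> complex) set" where
  "unit_combinations \<zeta> =
     {\<lambda>\<eta>. \<Sum>n<N. a n * \<zeta> n \<eta> | N a. (\<Sum>n<N. (cmod (a n))\<^sup>2) \<le> 1}"

lemma norm_unit_combination_le: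
  assumes "summable (\<lambda>n. (cmod (\<zeta> n \<eta>))\<^sup>2)" "\<Phi> \<in> unit_combinations \<zeta>"
  shows "cmod (\<Phi> \<eta>) \<le> sqrt (\<Sum>n. (cmod (\<zeta> n \<eta>))\<^sup>2)"
proof -
  obtain N a where a: "(\<Sum>n<N. (cmod (a n))\<^sup>2) \<le> 1" and \<Phi>: "\<Phi> = (\<lambda>\<eta>. \<Sum>n<N. a n * \<zeta> n \<eta>)"
    using assms(2) unfolding unit_combinations_def by blast
  have "cmod (\<Phi> \<eta>) \<le> sqrt (\<Sum>n<N. (cmod (a n))\<^sup>2) * sqrt (\<Sum>n<N. (cmod (\<zeta> n \<eta>))\<^sup>2)"
    unfolding \<Phi> by (rule norm_sum_mult_le_sqrt_sums)
  also have "\<dots> \<le> 1 * sqrt (\<Sum>n. (cmod (\<zeta> n \<eta>))\<^sup>2)"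
    using a sqrt_sum_lessThan_le_sqrt_suminf[OF assms(1)] by (intro mult_mono) (simp_all add: sum_nonneg)
  finally show ?thesis by simp
qed

lemma bnd_dual_unit_combinations:
  assumes bessel: "bessel_like D S \<zeta>" and \<zeta>: "\<forall>n. \<zeta> n \<in> dualx sc D S"
    and nonneg: "\<forall>p\<in>S. \<forall>x\<in>D. 0 \<le> p x"
  shows "bnd_dual sc D S (unit_combinations \<zeta>)"
  unfolding bnd_dual_def
proof (intro conjI ballI)
  show "unit_combinations \<zeta> \<subseteq> dualx sc D S"
    unfolding unit_combinations_def using dualx_sum_scaled[OF \<zeta> nonneg] by blast
  fix q assume "q \<in> strong_sn D S"
  then obtain M where M: "bnd D S M" "M \<noteq> {}" and q: "q = (\<lambda>\<Phi>. SUP \<eta>\<in>M. cmod (\<Phi> \<eta>))"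
    unfolding strong_sn_def by blast
  obtain K where K: "\<forall>\<eta>\<in>M. (\<Sum>k. (cmod (\<zeta> k \<eta>))\<^sup>2) \<le> K"
    using bessel M(1) unfolding bessel_like_def by blast
  have "q \<Phi> \<le> sqrt K" if "\<Phi> \<in> unit_combinations \<zeta>" for \<Phi>
    unfolding q
  proof (rule cSUP_least[OF M(2)])
    fix \<eta> assume "\<eta> \<in> M"
    have "cmod (\<Phi> \<eta>) \<le> sqrt (\<Sum>n. (cmod (\<zeta> n \<eta>))\<^sup>2)"
      using norm_unit_combination_le[of \<zeta> \<eta>, OF bessel_like_summable_squares[OF bessel \<zeta>] that] .
    also have "\<dots> \<le> sqrt K" using K \<open>\<eta> \<in> M\<close> by simp
    finally show "cmod (\<Phi> \<eta>) \<le> sqrt K" .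
  qed
  then show "\<exists>C. \<forall>\<Phi>\<in>unit_combinations \<zeta>. q \<Phi> \<le> C" by blast
qed

definition synthesis ::
  "('h \<Rightarrow> 'h \<Rightarrow> complex) \<Rightarrow> (nat \<Rightarrow> 'h) \<Rightarrow> (nat \<Rightarrow> 'h \<Rightarrow> complex) \<Rightarrow> 'h \<Rightarrow> 'h \<Rightarrow> complex" where
  "synthesis ip e \<zeta> x = (\<lambda>\<eta>. \<Sum>n. ip x (e n) * \<zeta> n \<eta>)"

context complex_hilbert
begin

context
  fixes e :: "nat \<Rightarrow> 'h" and \<zeta> :: "nat \<Rightarrow> 'h \<Rightarrow> complex"
    and D :: "'h set" and S :: "('h \<Rightarrow> real) set"
  assumes orthonormal: "orthonormal_seq ip e"
    and nonneg: "\<forall>p\<in>S. \<forall>x\<in>D. 0 \<le> p x"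
    and bessel: "bessel_like D S \<zeta>"
    and \<zeta>_dualx: "\<forall>n. \<zeta> n \<in> dualx sc D S"
begin

lemmas \<zeta>_summable_squares = bessel_like_summable_squares[OF bessel \<zeta>_dualx]

lemma summable_synthesis_terms: "summable (\<lambda>n. ip x (e n) * \<zeta> n \<eta>)"
proof (rule summable_norm_cancel, rule summable_comparison_test')
  show "summable (\<lambda>n. ((cmod (ip x (e n)))\<^sup>2 + (cmod (\<zeta> n \<eta>))\<^sup>2) / 2)"
    using summable_coeff_squares[OF orthonormal] \<zeta>_summable_squares
    by (intro summable_divide summable_add)
qed (use norm_mult_le_half_sum_squares in simp)

lemma norm_synthesis_le: "cmod (synthesis ip e \<zeta> x \<eta>) \<le> hnorm ip x * sqrt (\<Sum>n. (cmod (\<zeta> n \<eta>))\<^sup>2)"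
  unfolding synthesis_def
proof (rule norm_suminf_le_bound[OF summable_synthesis_terms])
  fix N
  have "cmod (\<Sum>n<N. ip x (e n) * \<zeta> n \<eta>)
      \<le> sqrt (\<Sum>n<N. (cmod (ip x (e n)))\<^sup>2) * sqrt (\<Sum>n<N. (cmod (\<zeta> n \<eta>))\<^sup>2)"
    by (rule norm_sum_mult_le_sqrt_sums)
  also have "\<dots> \<le> hnorm ip x * sqrt (\<Sum>n. (cmod (\<zeta> n \<eta>))\<^sup>2)"
    using sqrt_bessel_partial_le[OF orthonormal] sqrt_sum_lessThan_le_sqrt_suminf[OF \<zeta>_summable_squares]
      hnorm_nonneg
    by (intro mult_mono) (simp_all add: sum_nonneg)
  finally show "cmod (\<Sum>n<N. ip x (e n) * \<zeta> n \<eta>) \<le> hnorm ip x * sqrt (\<Sum>n. (cmod (\<zeta> n \<eta>))\<^sup>2)" .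
qed

lemma strong_sn_synthesis_le:
  assumes "q \<in> strong_sn D S"
  shows "\<exists>K. \<forall>x. q (synthesis ip e \<zeta> x) \<le> K * hnorm ip x"
proof -
  obtain M where M: "bnd D S M" "M \<noteq> {}" and q: "q = (\<lambda>\<Phi>. SUP \<eta>\<in>M. cmod (\<Phi> \<eta>))"
    using assms unfolding strong_sn_def by blast
  obtain K where K: "\<forall>\<eta>\<in>M. (\<Sum>k. (cmod (\<zeta> k \<eta>))\<^sup>2) \<le> K"
    using bessel M(1) unfolding bessel_like_def by blast
  have "q (synthesis ip e \<zeta> x) \<le> sqrt K * hnorm ip x" for x
    unfolding q
  proof (rule cSUP_least[OF M(2)])
    fix \<eta> assume "\<eta> \<in> M"
    then have "hnorm ip x * sqrt (\<Sum>n. (cmod (\<zeta> n \<eta>))\<^sup>2) \<le> hnorm ip x * sqrt K"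
      using K hnorm_nonneg by (intro mult_left_mono) auto
    then show "cmod (synthesis ip e \<zeta> x \<eta>) \<le> sqrt K * hnorm ip x"
      using norm_synthesis_le[of x \<eta>] by (simp add: mult.commute)
  qed
  then show ?thesis by blast
qed

text \<open>Finite partial sums of \<open>W x / \<parallel>x\<parallel>\<close> are unit combinations; pass to the limit.\<close>
lemma norm_synthesis_le_SUP_unit_combinations:
  "cmod (synthesis ip e \<zeta> x \<eta>) \<le> hnorm ip x * (SUP \<Phi>\<in>unit_combinations \<zeta>. cmod (\<Phi> \<eta>))"
proof (cases "x = 0")
  case False
  define h where "h = hnorm ip x"
  have h: "0 < h" using False hnorm_nonneg[of x] hnorm_eq_0[of x] unfolding h_def by fastforce
  have bdd: "bdd_above ((\<lambda>\<Phi>. cmod (\<Phi> \<eta>)) ` unit_combinations \<zeta>)"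
    using norm_unit_combination_le[of \<zeta> \<eta>, OF \<zeta>_summable_squares] by (rule bdd_aboveI2)
  show ?thesis
    unfolding synthesis_def
  proof (rule norm_suminf_le_bound[OF summable_synthesis_terms])
    fix N
    define a where "a n = ip x (e n) / of_real h" for n
    have "(\<Sum>n<N. (cmod (a n))\<^sup>2) = (\<Sum>n<N. (cmod (ip x (e n)))\<^sup>2) / h\<^sup>2"
      unfolding a_def by (simp add: norm_divide power_divide sum_divide_distrib)
    also have "\<dots> \<le> 1"
      using bessel_inequality_partial[OF orthonormal, where N=N and x=x] h unfolding h_def by simp
    finally have "(\<lambda>\<eta>. \<Sum>n<N. a n * \<zeta> n \<eta>) \<in> unit_combinations \<zeta>"
      unfolding unit_combinations_def by blast
    then have "cmod (\<Sum>n<N. a n * \<zeta> n \<eta>) \<le> (SUP \<Phi>\<in>unit_combinations \<zeta>. cmod (\<Phi> \<eta>))"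
      by (rule cSUP_upper[OF _ bdd])
    moreover have "(\<Sum>n<N. ip x (e n) * \<zeta> n \<eta>) = of_real h * (\<Sum>n<N. a n * \<zeta> n \<eta>)"
      unfolding a_def using h by (simp add: sum_distrib_left)
    ultimately show "cmod (\<Sum>n<N. ip x (e n) * \<zeta> n \<eta>) \<le> hnorm ip x * (SUP \<Phi>\<in>unit_combinations \<zeta>. cmod (\<Phi> \<eta>))"
      using h by (simp add: norm_mult flip: h_def)
  qed
qed (simp add: synthesis_def)

lemma synthesis_add: "synthesis ip e \<zeta> (x + y) = (\<lambda>\<eta>. synthesis ip e \<zeta> x \<eta> + synthesis ip e \<zeta> y \<eta>)"
  unfolding synthesis_def
  by (simp add: ip_add_left distrib_right suminf_add[OF summable_synthesis_terms summable_synthesis_terms])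

lemma synthesis_scale: "synthesis ip e \<zeta> (sc a x) = (\<lambda>\<eta>. a * synthesis ip e \<zeta> x \<eta>)"
  unfolding synthesis_def by (simp add: ip_sc_left mult.assoc suminf_mult[OF summable_synthesis_terms])

lemma synthesis_basis: "synthesis ip e \<zeta> (e m) = \<zeta> m"
proof
  fix \<eta>
  have "(\<lambda>n. ip (e m) (e n) * \<zeta> n \<eta>) = (\<lambda>n. if n = m then \<zeta> n \<eta> else 0)"
    using orthonormal unfolding orthonormal_seq_def by auto
  then show "synthesis ip e \<zeta> (e m) \<eta> = \<zeta> m \<eta>"
    unfolding synthesis_def using sums_single[of m "\<lambda>n. \<zeta> n \<eta>"] sums_unique by metis
qed

lemma synthesis_in_dualx:
  assumes "reflexive_lcs sc D S"
  shows "synthesis ip e \<zeta> x \<in> dualx sc D S"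
proof -
  have "unit_combinations \<zeta> \<noteq> {}"
    unfolding unit_combinations_def by (auto intro!: exI[of _ 0])
  then obtain F C where F: "F \<subseteq> S" "finite F"
    and C: "\<forall>\<eta>\<in>D. (SUP \<Phi>\<in>unit_combinations \<zeta>. cmod (\<Phi> \<eta>)) \<le> C * (\<Sum>p\<in>F. p \<eta>)"
    using reflexive_lcs_SUP_bnd_dual[OF assms bnd_dual_unit_combinations[OF bessel \<zeta>_dualx nonneg]]
    by blast
  have "cmod (synthesis ip e \<zeta> x \<eta>) \<le> (hnorm ip x * C) * (\<Sum>p\<in>F. p \<eta>)" if "\<eta> \<in> D" for \<eta>
    using norm_synthesis_le_SUP_unit_combinations[of x \<eta>]
      mult_left_mono[OF C[rule_format, OF that] hnorm_nonneg[of x]]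
    by (simp add: mult.assoc)
  moreover have "synthesis ip e \<zeta> x \<eta> = 0" if "\<eta> \<notin> D" for \<eta>
  proof -
    have "\<zeta> n \<eta> = 0" for n using dualx_vanishes \<zeta>_dualx that by blast
    then show ?thesis by (simp add: synthesis_def)
  qed
  moreover have "synthesis ip e \<zeta> x (\<eta> + \<eta>') = synthesis ip e \<zeta> x \<eta> + synthesis ip e \<zeta> x \<eta>'"
    if "\<eta> \<in> D" "\<eta>' \<in> D" for \<eta> \<eta>'
    using \<zeta>_dualx that unfolding synthesis_def dualx_def
    by (simp add: distrib_left suminf_add[OF summable_synthesis_terms summable_synthesis_terms])
  moreover have "synthesis ip e \<zeta> x (sc a \<eta>) = cnj a * synthesis ip e \<zeta> x \<eta>" if "\<eta> \<in> D" for a \<eta>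
    using \<zeta>_dualx that unfolding synthesis_def dualx_def
    by (simp add: mult.left_commute suminf_mult[OF summable_synthesis_terms])
  ultimately show ?thesis
    using F unfolding dualx_def by blast
qed

lemma synthesis_CHext:
  assumes "reflexive_lcs sc D S"
  shows "CHext sc ip D S (synthesis ip e \<zeta>) (synthesis ip e \<zeta>)"
  unfolding CHext_def
  using synthesis_in_dualx[OF assms] synthesis_add synthesis_scale strong_sn_synthesis_le by blast

lemma synthesis_in_Lop:
  assumes refl: "reflexive_lcs sc D S"
    and dom: "F0 \<subseteq> S" "finite F0" "\<forall>x\<in>D. hnorm ip x \<le> C0 * (\<Sum>p\<in>F0. p x)"
  shows "synthesis ip e \<zeta> \<in> Lop sc D S"
proof -
  have "\<exists>F C. F \<subseteq> S \<and> finite F \<and> (\<forall>x\<in>D. q (synthesis ip e \<zeta> x) \<le> C * (\<Sum>p\<in>F. p x))"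
    if q: "q \<in> strong_sn D S" for q
  proof -
    obtain K where K: "\<forall>x. q (synthesis ip e \<zeta> x) \<le> K * hnorm ip x"
      using strong_sn_synthesis_le[OF q] by blast
    have "q (synthesis ip e \<zeta> x) \<le> (\<bar>K\<bar> * C0) * (\<Sum>p\<in>F0. p x)" if "x \<in> D" for x
    proof -
      have "q (synthesis ip e \<zeta> x) \<le> K * hnorm ip x" using K by blast
      also have "\<dots> \<le> \<bar>K\<bar> * hnorm ip x"
        using hnorm_nonneg by (intro mult_right_mono) auto
      also have "\<dots> \<le> \<bar>K\<bar> * (C0 * (\<Sum>p\<in>F0. p x))"
        using dom(3) that by (intro mult_left_mono) auto
      finally show ?thesis by (simp add: mult.assoc)
    qed
    with dom show ?thesis by blast
  qed
  then show ?thesis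
    unfolding Lop_def mem_Collect_eq
    using synthesis_in_dualx[OF refl] synthesis_add synthesis_scale by blast
qed

end

lemma extension_sum_scaled:
  fixes W :: "'h \<Rightarrow> 'h \<Rightarrow> complex" and e :: "nat \<Rightarrow> 'h" and N :: nat
  assumes add: "\<forall>x y. W (x + y) = (\<lambda>\<eta>. W x \<eta> + W y \<eta>)"
    and scale: "\<forall>a x. W (sc a x) = (\<lambda>\<eta>. a * W x \<eta>)"
  shows "W (\<Sum>k<N. sc (a k) (e k)) \<eta> = (\<Sum>k<N. a k * W (e k) \<eta>)"
proof -
  have "W 0 \<eta> = W 0 \<eta> + W 0 \<eta>"
    using fun_cong[OF add[rule_format, of 0 0], of \<eta>] by simp
  then have "W 0 \<eta> = 0" by simp
  then show ?thesis by (induction N) (simp_all add: add scale)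
qed

text \<open>Testing \<open>W\<close> at \<open>x = \<Sum>\<^sub>k\<^sub><\<^sub>N conj(\<zeta>\<^sub>k \<eta>) e\<^sub>k\<close>, whose norm is \<open>\<surd>s\<close>, yields \<open>W x \<eta> = s\<close>.\<close>
lemma CHext_partial_sum_squares_le:
  assumes orthonormal: "orthonormal_seq ip e"
    and nonneg: "\<forall>p\<in>S. \<forall>x\<in>D. 0 \<le> p x"
    and W: "CHext sc ip D S X W" and W_basis: "\<forall>n. W (e n) = \<zeta> n"
    and M: "bnd D S M" and \<eta>: "\<eta> \<in> M"
    and C: "\<forall>x. (SUP \<eta>\<in>M. cmod (W x \<eta>)) \<le> C * hnorm ip x"
  shows "(\<Sum>k<N. (cmod (\<zeta> k \<eta>))\<^sup>2) \<le> C\<^sup>2"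
proof -
  have add: "\<forall>x y. W (x + y) = (\<lambda>\<eta>. W x \<eta> + W y \<eta>)"
    and scale: "\<forall>a x. W (sc a x) = (\<lambda>\<eta>. a * W x \<eta>)"
    and dual: "\<forall>x. W x \<in> dualx sc D S"
    using W unfolding CHext_def by blast+
  define s where "s = (\<Sum>k<N. (cmod (\<zeta> k \<eta>))\<^sup>2)"
  define x where "x = (\<Sum>k<N. sc (cnj (\<zeta> k \<eta>)) (e k))"
  have "W x \<eta> = (\<Sum>k<N. cnj (\<zeta> k \<eta>) * \<zeta> k \<eta>)"
    unfolding x_def extension_sum_scaled[OF add scale] using W_basis by simp
  also have "\<dots> = of_real s"
    unfolding s_def by (simp add: complex_norm_square[symmetric] mult.commute)
  finally have W_x: "W x \<eta> = of_real s" .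
  have s_nonneg: "0 \<le> s" unfolding s_def by (simp add: sum_nonneg)
  have "s = cmod (W x \<eta>)" using W_x s_nonneg by simp
  also have "\<dots> \<le> (SUP \<eta>\<in>M. cmod (W x \<eta>))"
    by (rule cSUP_upper[OF \<eta> dualx_bdd_above_on_bnd[OF dual[rule_format] M nonneg]])
  also have "\<dots> \<le> C * hnorm ip x" using C by blast
  also have "\<dots> = C * sqrt s"
    unfolding x_def s_def hnorm_orthonormal_comb[OF orthonormal] by simp
  finally have "s \<le> C * sqrt s" .
  with s_nonneg have "s \<le> C\<^sup>2" by (rule le_square_if_le_mult_sqrt)
  then show ?thesis unfolding s_def .
qed

lemma bessel_like_if_CHext:
  assumes orthonormal: "orthonormal_seq ip e"
    and nonneg: "\<forall>p\<in>S. \<forall>x\<in>D. 0 \<le> p x"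
    and W: "CHext sc ip D S X W" and W_basis: "\<forall>n. W (e n) = \<zeta> n"
  shows "bessel_like D S \<zeta>"
  unfolding bessel_like_def
proof (intro allI impI)
  fix M assume M: "bnd D S M"
  show "\<exists>B. \<forall>\<eta>\<in>M. summable (\<lambda>k. (cmod (\<zeta> k \<eta>))\<^sup>2) \<and> (\<Sum>k. (cmod (\<zeta> k \<eta>))\<^sup>2) \<le> B"
  proof (cases "M = {}")
    case False
    then have sup_M: "(\<lambda>\<Phi>. SUP \<eta>\<in>M. cmod (\<Phi> \<eta>)) \<in> strong_sn D S"
      unfolding strong_sn_def using M by blast
    have "\<forall>q\<in>strong_sn D S. \<exists>C. \<forall>x. q (W x) \<le> C * hnorm ip x"
      using W unfolding CHext_def by blast
    from bspec[OF this sup_M] obtain C where C: "\<forall>x. (SUP \<eta>\<in>M. cmod (W x \<eta>)) \<le> C * hnorm ip x"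
      by blast
    have "summable (\<lambda>k. (cmod (\<zeta> k \<eta>))\<^sup>2) \<and> (\<Sum>k. (cmod (\<zeta> k \<eta>))\<^sup>2) \<le> C\<^sup>2" if "\<eta> \<in> M" for \<eta>
    proof
      note partial = CHext_partial_sum_squares_le[OF orthonormal nonneg W W_basis M that C]
      show summable: "summable (\<lambda>k. (cmod (\<zeta> k \<eta>))\<^sup>2)"
        using partial by (intro summableI_nonneg_bounded) auto
      show "(\<Sum>k. (cmod (\<zeta> k \<eta>))\<^sup>2) \<le> C\<^sup>2"
        using partial by (intro suminf_le_const[OF summable])
    qed
    then show ?thesis by blast
  qed blast
qed

end

theorem proposition2p13:
  fixes sc :: "complex \<Rightarrow> 'h::ab_group_add \<Rightarrow> 'h"
    and ip :: "'h \<Rightarrow> 'h \<Rightarrow> complex"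
    and D :: "'h set"
    and S :: "('h \<Rightarrow> real) set"
    and \<zeta> :: "nat \<Rightarrow> ('h \<Rightarrow> complex)"
  assumes "rigged sc ip D S"
    and "\<exists>e. onb ip e"
    and "lcs_complete D S"
    and "reflexive_lcs sc D S"
    and "\<forall>n. \<zeta> n \<in> dualx sc D S"
  shows "bessel_like D S \<zeta> \<longleftrightarrow>
         (\<forall>e. onb ip e \<longrightarrow>
            (\<exists>X\<in>Lop sc D S. \<exists>W. CHext sc ip D S X W \<and> (\<forall>n. W (e n) = \<zeta> n)))"
proof -
  interpret complex_hilbert sc ip
    using assms(1) unfolding rigged_def by unfold_locales blast
  have nonneg: "\<forall>p\<in>S. \<forall>x\<in>D. 0 \<le> p x"
    using assms(1) unfolding rigged_def seminorm_on_def by blast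
  obtain F0 C0 where dom: "F0 \<subseteq> S" "finite F0" "\<forall>x\<in>D. hnorm ip x \<le> C0 * (\<Sum>p\<in>F0. p x)"
    using assms(1) unfolding rigged_def by blast
  show ?thesis
  proof (intro iffI allI impI)
    fix e assume bessel: "bessel_like D S \<zeta>" and "onb ip e"
    from \<open>onb ip e\<close> have e: "orthonormal_seq ip e" by (rule onb_imp_orthonormal_seq)
    show "\<exists>X\<in>Lop sc D S. \<exists>W. CHext sc ip D S X W \<and> (\<forall>n. W (e n) = \<zeta> n)"
      using synthesis_in_Lop[OF e nonneg bessel assms(5,4) dom]
        synthesis_CHext[OF e nonneg bessel assms(5,4)] synthesis_basis[OF e nonneg bessel assms(5)]
      by blast
  next
    assume W_exists: "\<forall>e. onb ip e \<longrightarrow> (\<exists>X\<in>Lop sc D S. \<exists>W. CHext sc ip D S X W \<and> (\<forall>n. W (e n) = \<zeta> n))"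
    obtain e where e: "onb ip e" using assms(2) by blast
    with W_exists obtain X W where "CHext sc ip D S X W" "\<forall>n. W (e n) = \<zeta> n" by blast
    then show "bessel_like D S \<zeta>"
      by (rule bessel_like_if_CHext[OF onb_imp_orthonormal_seq[OF e] nonneg])
  qed
qed

end
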